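(* Let $\mathcal H$ be an index set (possibly uncountably infinite). For each $h\in\mathcal H$ let $X_1(h),X_2(h),\dots$ be real random variables, and let $\mathcal T_t=\{X_\tau(h)\}_{1\le\tau\le t,\,h\in\mathcal H}$ denote everything observed up to time $t$. Assume $\mathbb E[X_t(h)\mid\mathcal T_{t-1}]=0$ for all $t,h$ (the variables $X_t(h)$ for different $h$ need not be independent), and $|X_t(h)|\le C$ for all $t,h$. Let $M_t(h)=\sum_{\tau=1}^t X_\tau(h)$ and $V_t(h)=\sum_{\tau=1}^t\mathbb E[X_\tau(h)^2\mid\mathcal T_{\tau-1}]$, and for a distribution $\rho$ on $\mathcal H$ let $M_t(\rho)=\mathbb E_{\rho(h)}[M_t(h)]$, $V_t(\rho)=\mathbb E_{\rho(h)}[V_t(h)]$. Let $\delta\in(0,1)$ and $L_t=2\ln(t+1)+\ln\frac{2}{\delta}$. Let $\mu_1,\mu_2,\dots$ be "reference" (prior) distributions on $\mathcal H$ such that $\mu_t$ is independent of $\mathcal T_t$ (it may depend on $t$), and let $\bar V_1,\bar V_2,\dots$ be positive numbers such that $\bar V_t$ is independent of $\mathcal T_t$ (it may depend on $t$) and $$\sqrt{\frac{L_t}{(e-2)\bar V_t}}\le\frac1C\quad\text{for all }t.$$ Then with probability at least $1-\delta$, simultaneously for all $t\ge1$ and all distributions $\rho_t$ on $\mathcal H$ (which may depend on the observations), $$|M_t(\rho_t)|\le\sqrt{e-2}\left(KL(\rho_t\|\mu_t)\sqrt{\frac{\bar V_t}{L_t}}+V_t(\rho_t)\sqrt{\frac{L_t}{\bar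 V_t}}+\sqrt{L_t\bar V_t}\right).$$
   Context: $KL(\rho\|\mu)=\mathbb E_{\rho(h)}[\ln\frac{\rho(h)}{\mu(h)}]$ is the Kullback–Leibler divergence. "Independent of $\mathcal T_t$" means the object is chosen without reference to the observed random variables (e.g., fixed in advance as a function of $t$). *)

theory Defs
  imports "HOL-Probability.Probability"
begin

definition obs_filtration ::
  "'a measure \<Rightarrow> 'h measure \<Rightarrow> (nat \<Rightarrow> 'h \<Rightarrow> 'a \<Rightarrow> real) \<Rightarrow> nat \<Rightarrow> 'a measure" where
  "obs_filtration M H X t =
     sigma (space M) {X \<tau> h -` B \<inter> space M | \<tau> h B. 1 \<le> \<tau> \<and> \<tau> \<le> t \<and> h \<in> space H \<and> B \<in> sets borel}"

definition KL :: "'h measure \<Rightarrow> 'h measure \<Rightarrow> ereal" where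
  "KL \<rho> \<mu> =
     (if absolutely_continuous \<mu> \<rho> \<and> integrable \<rho> (\<lambda>h. ln (enn2real (RN_deriv \<mu> \<rho> h)))
      then ereal (\<integral>h. ln (enn2real (RN_deriv \<mu> \<rho> h)) \<partial>\<rho>)
      else \<infinity>)"

end

theory Submission
  imports Defs
begin

text \<open>For a fixed \<open>h\<close> and \<open>\<bar>\<eta>\<bar> C \<le> 1\<close>, the elementary bound
  \<open>e\<^sup>x \<le> 1 + x + (e - 2) x\<^sup>2\<close> (for \<open>\<bar>x\<bar> \<le> 1\<close>) makes
  \<open>exp (\<eta> M\<^sub>t(h) - (e - 2) \<eta>\<^sup>2 V\<^sub>t(h))\<close> a supermartingale, so its expectation is at most 1.
  Since \<open>\<mu>\<^sub>t\<close> does not depend on the observations, Tonelli keeps the expectation of its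
  \<open>\<mu>\<^sub>t\<close>-average at most 1, and Markov's inequality with a union bound over \<open>t \<ge> 1\<close> and
  \<open>\<pm>\<eta>\<^sub>t\<close> bounds all these averages by \<open>2 (t + 1)\<^sup>2 / \<delta> = e^L\<^sub>t\<close> simultaneously,
  with probability at least \<open>1 - \<delta>\<close>. On that event the Donsker--Varadhan change of measure
  transfers the bound to any posterior \<open>\<rho>\<close> at the price \<open>KL(\<rho>\<parallel>\<mu>\<^sub>t)\<close>, and the choice
  \<open>\<eta>\<^sub>t = \<surd>(L\<^sub>t / ((e - 2) V\<^sub>t))\<close> of the free parameter yields the stated form.\<close>

lemma exp_le_one_plus_quadratic:
  fixes x :: real
  assumes "\<bar>x\<bar> \<le> 1"
  shows "exp x \<le> 1 + x + (exp 1 - 2) * x\<^sup>2"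
proof -
  let ?tail = "\<lambda>y::real. \<lambda>n. inverse (fact (n + 2)) * y ^ (n + 2)"
  have summable: "summable (?tail y)" for y :: real
    by (rule summable_exp [THEN summable_ignore_initial_segment])
  have "suminf (?tail x) \<le> suminf (\<lambda>n. x\<^sup>2 * ?tail 1 n)"
  proof (rule suminf_le)
    fix n
    have "x ^ (n + 2) \<le> \<bar>x\<bar> ^ n * x\<^sup>2"
      by (metis abs_ge_self power_abs power_add power2_abs)
    also have "\<dots> \<le> x\<^sup>2"
      using assms by (intro mult_left_le_one_le) (auto intro: power_le_one)
    finally show "?tail x n \<le> x\<^sup>2 * ?tail 1 n"
      by (simp add: mult_left_mono mult.commute)
  qed (use summable[of x] summable_mult[OF summable[of 1]] in auto)
  also have "\<dots> = x\<^sup>2 * (exp 1 - 2)"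
    using suminf_mult[OF summable[of 1], of "x\<^sup>2"] exp_first_two_terms[of "1::real"] by simp
  finally show ?thesis
    unfolding exp_first_two_terms[of x] by (simp add: mult.commute)
qed

lemma mult_le_abs_mult_bound:
  fixes x y C :: real
  assumes "\<bar>y\<bar> \<le> C"
  shows "x * y \<le> \<bar>x\<bar> * C"
  using abs_ge_self[of "x * y"] mult_left_mono[OF assms abs_ge_zero[of x]] by (simp add: abs_mult)

lemma exp_one_gt_two: "2 < exp (1::real)"
  using exp_lower_Taylor_quadratic[of 1] by simp

lemma suminf_inverse_square_shift_le_one:
  "summable (\<lambda>n. 1 / (real n + 2)\<^sup>2) \<and> (\<Sum>n. 1 / (real n + 2)\<^sup>2) \<le> 1"
proof -
  have telescope: "(\<lambda>n. 1 / (real n + 1) - 1 / (real n + 2)) sums 1"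
    using telescope_sums'[OF LIMSEQ_inverse_real_of_nat] by (simp add: inverse_eq_divide add.commute)
  have le: "1 / (real n + 2)\<^sup>2 \<le> 1 / (real n + 1) - 1 / (real n + 2)" for n
  proof -
    have "1 / (real n + 2)\<^sup>2 \<le> 1 / ((real n + 1) * (real n + 2))"
      unfolding power2_eq_square by (intro divide_left_mono mult_right_mono) auto
    also have "\<dots> = 1 / (real n + 1) - 1 / (real n + 2)"
      by (simp add: field_simps)
    finally show ?thesis .
  qed
  have summable: "summable (\<lambda>n. 1 / (real n + 2)\<^sup>2)"
    by (rule summable_comparison_test'[OF sums_summable[OF telescope], of 0]) (use le in simp)
  moreover have "(\<Sum>n. 1 / (real n + 2)\<^sup>2) \<le> 1"
    using suminf_le[OF le summable sums_summable[OF telescope]] sums_unique[OF telescope] by simp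
  ultimately show ?thesis ..
qed

lemma ereal_abs_le_rescale:
  fixes L W c \<eta> m V :: real and k :: ereal
  assumes L: "0 < L" and W: "0 < W" and c: "0 < c" and \<eta>: "\<eta> = sqrt (L / (c * W))"
    and bound: "ereal \<bar>\<eta> * m\<bar> \<le> k + ereal (L + c * \<eta>\<^sup>2 * V)"
  shows "ereal \<bar>m\<bar> \<le> ereal (sqrt c) * (k * ereal (sqrt (W / L)) + ereal (V * sqrt (L / W) + sqrt (L * W)))"
proof (cases k)
  case (real r)
  have \<eta>_pos: "0 < \<eta>"
    unfolding \<eta> using L W c by simp
  have "\<eta> * \<bar>m\<bar> \<le> r + L + c * \<eta>\<^sup>2 * V"
    using bound \<eta>_pos by (simp add: real abs_mult)
  then have "\<bar>m\<bar> \<le> r / \<eta> + L / \<eta> + c * \<eta> * V"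
    using \<eta>_pos by (simp add: field_simps power2_eq_square)
  moreover have "1 / \<eta> = sqrt c * sqrt (W / L)" "L / \<eta> = sqrt c * sqrt (L * W)"
      "c * \<eta> = sqrt c * sqrt (L / W)"
    using L W c unfolding \<eta>
    by (simp_all add: real_sqrt_divide real_sqrt_mult field_simps)
  moreover have "r / \<eta> = r * (1 / \<eta>)"
    by simp
  ultimately show ?thesis
    by (simp add: real algebra_simps)
next
  case PInf
  then show ?thesis
    using L W c by (simp add: ennreal_mult_top)
next
  case MInf
  then show ?thesis
    using bound by simp
qed

section \<open>Change of measure\<close>

lemma ennreal_mult_div_enn2real_le:
  fixes r :: ennreal and e :: real
  assumes "0 \<le> e"
  shows "r * ennreal (e / enn2real r) \<le> ennreal e"
proof (cases r)
  case (real x)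
  then show ?thesis
    using assms by (cases "x = 0") (simp_all flip: ennreal_mult)
qed simp

lemma AE_RN_deriv_positive:
  assumes "prob_space \<mu>" "prob_space \<rho>" "sets \<rho> = sets \<mu>" "absolutely_continuous \<mu> \<rho>"
  shows "AE h in \<rho>. 0 < enn2real (RN_deriv \<mu> \<rho> h)"
proof -
  interpret \<mu>: prob_space \<mu> by fact
  interpret \<rho>: prob_space \<rho> by fact
  obtain D where D: "AE h in \<mu>. RN_deriv \<mu> \<rho> h = ennreal (D h)" and D_pos: "AE h in \<rho>. 0 < D h"
    by (rule \<mu>.real_RN_deriv[OF \<rho>.finite_measure_axioms assms(4,3)])
  have "AE h in \<rho>. RN_deriv \<mu> \<rho> h = ennreal (D h)"
    using D by (rule absolutely_continuous_AE[OF assms(3,4)])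
  with D_pos show ?thesis
    by eventually_elim simp
qed

lemma nn_integral_div_RN_deriv_le:
  fixes f :: "'h \<Rightarrow> real"
  assumes "sigma_finite_measure \<mu>" "absolutely_continuous \<mu> \<rho>" "sets \<rho> = sets \<mu>"
    and f_meas: "f \<in> borel_measurable \<mu>" and f_nonneg: "\<And>h. 0 \<le> f h"
  shows "(\<integral>\<^sup>+h. ennreal (f h / enn2real (RN_deriv \<mu> \<rho> h)) \<partial>\<rho>) \<le> (\<integral>\<^sup>+h. ennreal (f h) \<partial>\<mu>)"
proof -
  interpret \<mu>: sigma_finite_measure \<mu> by fact
  have "(\<integral>\<^sup>+h. ennreal (f h / enn2real (RN_deriv \<mu> \<rho> h)) \<partial>\<rho>)
      = (\<integral>\<^sup>+h. RN_deriv \<mu> \<rho> h * ennreal (f h / enn2real (RN_deriv \<mu> \<rho> h)) \<partial>\<mu>)"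
    using f_meas by (intro \<mu>.RN_deriv_nn_integral[OF assms(2,3)]) simp
  also have "\<dots> \<le> (\<integral>\<^sup>+h. ennreal (f h) \<partial>\<mu>)"
    using f_nonneg by (intro nn_integral_mono ennreal_mult_div_enn2real_le)
  finally show ?thesis .
qed

text \<open>Donsker--Varadhan change of measure: the pointwise inequality
  \<open>f - ln r - ln K \<le> e\<^sup>f / (r K) - 1\<close> for the density \<open>r = d\<rho>/d\<mu>\<close>, integrated against \<open>\<rho>\<close>.\<close>
lemma integral_le_KL_plus_ln_exp_integral:
  fixes \<mu> \<rho> :: "'h measure" and f :: "'h \<Rightarrow> real" and K :: real
  assumes \<mu>: "prob_space \<mu>" and \<rho>: "prob_space \<rho>" and sets: "sets \<rho> = sets \<mu>"
    and f_meas: "f \<in> borel_measurable \<mu>" and f_int: "integrable \<rho> f"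
    and exp_int: "(\<integral>\<^sup>+h. ennreal (exp (f h)) \<partial>\<mu>) \<le> ennreal K"
  shows "ereal (\<integral>h. f h \<partial>\<rho>) \<le> KL \<rho> \<mu> + ereal (ln K)"
proof (cases "absolutely_continuous \<mu> \<rho> \<and> integrable \<rho> (\<lambda>h. ln (enn2real (RN_deriv \<mu> \<rho> h)))")
  case False
  then show ?thesis by (auto simp: KL_def)
next
  case True
  then have ac: "absolutely_continuous \<mu> \<rho>"
    and ln_int: "integrable \<rho> (\<lambda>h. ln (enn2real (RN_deriv \<mu> \<rho> h)))" by auto
  interpret \<mu>: prob_space \<mu> by (rule \<mu>)
  interpret \<rho>: prob_space \<rho> by (rule \<rho>)
  define r where "r h = enn2real (RN_deriv \<mu> \<rho> h)" for h
  define g where "g h = exp (f h) / r h" for h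
  have [measurable]: "f \<in> borel_measurable \<mu>" by (rule f_meas)
  have g_meas: "g \<in> borel_measurable \<rho>"
    unfolding measurable_cong_sets[OF sets refl] g_def r_def by measurable
  have g_nonneg: "0 \<le> g h" for h
    unfolding g_def r_def by simp
  have K_pos: "0 < K"
  proof (rule ccontr)
    assume "\<not> 0 < K"
    then have "ennreal K = 0"
      by (simp add: ennreal_eq_0_iff)
    then have "(\<integral>\<^sup>+h. ennreal (exp (f h)) \<partial>\<mu>) = 0"
      using exp_int by simp
    then have "AE h in \<mu>. False"
      by (subst (asm) nn_integral_0_iff_AE) auto
    then show False by (simp add: \<mu>.AE_False)
  qed
  have "(\<lambda>h. exp (f h)) \<in> borel_measurable \<mu>"
    by measurable
  from nn_integral_div_RN_deriv_le[OF \<mu>.sigma_finite_measure_axioms ac sets this exp_ge_zero]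
  have g_nn_le: "(\<integral>\<^sup>+h. ennreal (g h) \<partial>\<rho>) \<le> ennreal K"
    using exp_int unfolding g_def r_def by (rule order.trans)
  then have g_int: "integrable \<rho> g"
    using g_meas g_nonneg by (intro integrableI_nonneg) (auto simp: le_less_trans)
  have "ennreal (\<integral>h. g h \<partial>\<rho>) \<le> ennreal K"
    using g_nn_le g_int g_nonneg by (subst nn_integral_eq_integral[symmetric]) auto
  then have g_le: "(\<integral>h. g h \<partial>\<rho>) \<le> K"
    using K_pos by (simp add: ennreal_le_iff)
  have "(\<integral>h. f h - ln (r h) \<partial>\<rho>) \<le> (\<integral>h. g h / K + (ln K - 1) \<partial>\<rho>)"
  proof (rule integral_mono_AE)
    show "AE h in \<rho>. f h - ln (r h) \<le> g h / K + (ln K - 1)"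
      using AE_RN_deriv_positive[OF \<mu> \<rho> sets ac] unfolding r_def[symmetric]
    proof eventually_elim
      case (elim h)
      have "1 + (f h - ln (r h) - ln K) \<le> exp (f h - ln (r h) - ln K)"
        by (rule exp_ge_add_one_self)
      also have "\<dots> = g h / K"
        using elim K_pos by (simp add: exp_diff g_def)
      finally show ?case by simp
    qed
  qed (use f_int ln_int g_int in \<open>auto simp: r_def\<close>)
  also have "\<dots> \<le> ln K"
    using g_int g_le K_pos by (simp add: \<rho>.prob_space divide_le_eq)
  finally show ?thesis
    using True f_int ln_int by (simp add: KL_def r_def)
qed

lemma abs_integral_le_KL_plus_ln:
  fixes \<mu> \<rho> :: "'h measure" and m v :: "'h \<Rightarrow> real" and \<eta> b K B B' :: real
  assumes \<mu>: "prob_space \<mu>" and \<rho>: "prob_space \<rho>" and sets: "sets \<rho> = sets \<mu>"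
    and m_meas: "m \<in> borel_measurable \<mu>" and m_bound: "\<And>h. h \<in> space \<mu> \<Longrightarrow> \<bar>m h\<bar> \<le> B"
    and v_meas: "v \<in> borel_measurable \<mu>" and v_bound: "AE h in \<mu>. \<bar>v h\<bar> \<le> B'"
    and exp_int: "\<And>s. s \<in> {-1, 1} \<Longrightarrow>
      (\<integral>\<^sup>+h. ennreal (exp (s * \<eta> * m h - b * v h)) \<partial>\<mu>) \<le> ennreal K"
  shows "ereal \<bar>\<eta> * (\<integral>h. m h \<partial>\<rho>)\<bar> \<le> KL \<rho> \<mu> + ereal (ln K + b * (\<integral>h. v h \<partial>\<rho>))"
proof (cases "absolutely_continuous \<mu> \<rho>")
  case False
  then show ?thesis by (simp add: KL_def)
next
  case True
  interpret \<rho>: prob_space \<rho> by (rule \<rho>)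
  have [measurable]: "m \<in> borel_measurable \<mu>" "v \<in> borel_measurable \<mu>"
    by (fact m_meas, fact v_meas)
  note \<rho>_meas = measurable_cong_sets[OF sets refl]
  have m_int: "integrable \<rho> m"
    using m_meas m_bound sets_eq_imp_space_eq[OF sets]
    by (intro \<rho>.integrable_const_bound[where B = B]) (auto simp: \<rho>_meas)
  have v_int: "integrable \<rho> v"
    using absolutely_continuous_AE[OF sets True v_bound] v_meas
    by (intro \<rho>.integrable_const_bound[where B = B']) (auto simp: \<rho>_meas)
  have signed: "ereal (s * \<eta> * (\<integral>h. m h \<partial>\<rho>)) \<le> KL \<rho> \<mu> + ereal (ln K + b * (\<integral>h. v h \<partial>\<rho>))"
    if s: "s \<in> {-1, 1}" for s
  proof -
    have "ereal (\<integral>h. s * \<eta> * m h - b * v h \<partial>\<rho>) \<le> KL \<rho> \<mu> + ereal (ln K)"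
      using m_int v_int by (intro integral_le_KL_plus_ln_exp_integral[OF \<mu> \<rho> sets _ _ exp_int[OF s]]) auto
    moreover have "(\<integral>h. s * \<eta> * m h - b * v h \<partial>\<rho>) = s * \<eta> * (\<integral>h. m h \<partial>\<rho>) - b * (\<integral>h. v h \<partial>\<rho>)"
      using m_int v_int by simp
    ultimately show ?thesis
      by (cases "KL \<rho> \<mu>") (simp_all add: algebra_simps)
  qed
  show ?thesis
  proof (cases "0 \<le> \<eta> * (\<integral>h. m h \<partial>\<rho>)")
    case True
    then show ?thesis using signed[of 1] by simp
  next
    case False
    then show ?thesis using signed[of "-1"] by simp
  qed
qed

section \<open>Exponential supermartingales\<close>

context sigma_finite_subalgebra
begin

lemma integral_mult_eq_zero_if_cond_exp_zero:
  assumes "W \<in> borel_measurable F" "Y \<in> borel_measurable M" "integrable M (\<lambda>\<omega>. W \<omega> * Y \<omega>)"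
    and "AE \<omega> in M. real_cond_exp M F Y \<omega> = 0"
  shows "(\<integral>\<omega>. W \<omega> * Y \<omega> \<partial>M) = 0"
proof -
  have [measurable]: "W \<in> borel_measurable M"
    by (rule measurable_from_subalg[OF subalg assms(1)])
  have "(\<integral>\<omega>. W \<omega> * Y \<omega> \<partial>M) = (\<integral>\<omega>. W \<omega> * real_cond_exp M F Y \<omega> \<partial>M)"
    by (rule real_cond_exp_intg(2)[OF assms(3,1,2), symmetric])
  also have "\<dots> = 0"
    using assms(4) by (subst integral_cong_AE[where g = "\<lambda>_. 0"]) (auto elim!: eventually_mono)
  finally show ?thesis .
qed

lemma
  assumes W_meas: "W \<in> borel_measurable F" and g_meas: "g \<in> borel_measurable M"
    and Wg_int: "integrable M (\<lambda>\<omega>. W \<omega> * g \<omega>)"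
    and V_meas: "V \<in> borel_measurable M" and V_cond: "AE \<omega> in M. V \<omega> = real_cond_exp M F g \<omega>"
  shows integrable_mult_cond_exp_version: "integrable M (\<lambda>\<omega>. W \<omega> * V \<omega>)"
    and integral_mult_cond_exp_version: "(\<integral>\<omega>. W \<omega> * V \<omega> \<partial>M) = (\<integral>\<omega>. W \<omega> * g \<omega> \<partial>M)"
proof -
  have [measurable]: "W \<in> borel_measurable M"
    by (rule measurable_from_subalg[OF subalg W_meas])
  have AE_eq: "AE \<omega> in M. W \<omega> * real_cond_exp M F g \<omega> = W \<omega> * V \<omega>"
    using V_cond by eventually_elim simp
  note intg = real_cond_exp_intg[OF Wg_int W_meas g_meas]
  show "integrable M (\<lambda>\<omega>. W \<omega> * V \<omega>)"
    using V_meas by (intro integrable_cong_AE_imp[OF intg(1) _ AE_eq]) measurable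
  have "(\<integral>\<omega>. W \<omega> * real_cond_exp M F g \<omega> \<partial>M) = (\<integral>\<omega>. W \<omega> * V \<omega> \<partial>M)"
    using V_meas by (intro integral_cong_AE[OF _ _ AE_eq]) measurable
  with intg(2) show "(\<integral>\<omega>. W \<omega> * V \<omega> \<partial>M) = (\<integral>\<omega>. W \<omega> * g \<omega> \<partial>M)"
    by simp
qed

end

context finite_measure_subalgebra
begin

lemma
  fixes W Y V :: "'a \<Rightarrow> real" and \<eta> C K :: real
  assumes W_meas: "W \<in> borel_measurable F"
    and W_bounds: "\<And>\<omega>. \<omega> \<in> space M \<Longrightarrow> 0 \<le> W \<omega> \<and> W \<omega> \<le> K"
    and Y_meas: "Y \<in> borel_measurable M"
    and Y_bound: "\<And>\<omega>. \<omega> \<in> space M \<Longrightarrow> \<bar>Y \<omega>\<bar> \<le> C" and \<eta>C: "\<bar>\<eta>\<bar> * C \<le> 1"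
    and Y_mart: "AE \<omega> in M. real_cond_exp M F Y \<omega> = 0"
    and V_meas: "V \<in> borel_measurable M"
    and V_cond: "AE \<omega> in M. V \<omega> = real_cond_exp M F (\<lambda>\<omega>. (Y \<omega>)\<^sup>2) \<omega>"
  shows integrable_mult_cond_var: "integrable M (\<lambda>\<omega>. W \<omega> * V \<omega>)"
    and integral_mult_exp_le_cond_var:
      "(\<integral>\<omega>. W \<omega> * exp (\<eta> * Y \<omega>) \<partial>M) \<le> (\<integral>\<omega>. W \<omega> + (exp 1 - 2) * \<eta>\<^sup>2 * (W \<omega> * V \<omega>) \<partial>M)"
proof -
  define a where "a = (exp 1 - 2) * \<eta>\<^sup>2"
  have [measurable]: "W \<in> borel_measurable M"
    by (rule measurable_from_subalg[OF subalg W_meas])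
  have bounded_integrable: "integrable M (\<lambda>\<omega>. W \<omega> * g \<omega>)"
    if [measurable]: "g \<in> borel_measurable M" and "\<And>\<omega>. \<omega> \<in> space M \<Longrightarrow> \<bar>g \<omega>\<bar> \<le> B" for g B
  proof (rule integrable_const_bound[where B = "K * B"])
    show "AE \<omega> in M. norm (W \<omega> * g \<omega>) \<le> K * B"
      using W_bounds that(2) by (intro AE_I2) (force simp: abs_mult intro!: mult_mono)
  qed measurable
  have Y_sq_bound: "\<bar>(Y \<omega>)\<^sup>2\<bar> \<le> C\<^sup>2" if "\<omega> \<in> space M" for \<omega>
    using power_mono[OF _ abs_ge_zero, of "Y \<omega>" C 2] Y_bound[OF that] by simp
  have int_W: "integrable M W"
    using bounded_integrable[of "\<lambda>_. 1" 1] by simp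
  have int_WY: "integrable M (\<lambda>\<omega>. W \<omega> * Y \<omega>)"
    using bounded_integrable[OF Y_meas Y_bound] .
  have int_WY2: "integrable M (\<lambda>\<omega>. W \<omega> * (Y \<omega>)\<^sup>2)"
    using bounded_integrable[OF _ Y_sq_bound] Y_meas by simp
  have int_WexpY: "integrable M (\<lambda>\<omega>. W \<omega> * exp (\<eta> * Y \<omega>))"
  proof (rule bounded_integrable)
    fix \<omega> assume \<omega>: "\<omega> \<in> space M"
    have "\<eta> * Y \<omega> \<le> \<bar>\<eta>\<bar> * C"
      by (rule mult_le_abs_mult_bound[OF Y_bound[OF \<omega>]])
    then show "\<bar>exp (\<eta> * Y \<omega>)\<bar> \<le> exp (\<bar>\<eta>\<bar> * C)" by simp
  qed (use Y_meas in measurable)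
  show int_WV: "integrable M (\<lambda>\<omega>. W \<omega> * V \<omega>)"
    using Y_meas by (intro integrable_mult_cond_exp_version[OF W_meas _ int_WY2 V_meas V_cond]) simp
  have "(\<integral>\<omega>. W \<omega> * exp (\<eta> * Y \<omega>) \<partial>M) \<le> (\<integral>\<omega>. W \<omega> + \<eta> * (W \<omega> * Y \<omega>) + a * (W \<omega> * (Y \<omega>)\<^sup>2) \<partial>M)"
  proof (rule integral_mono[OF int_WexpY])
    fix \<omega> assume \<omega>: "\<omega> \<in> space M"
    have "\<bar>\<eta> * Y \<omega>\<bar> \<le> 1"
      using mult_left_mono[OF Y_bound[OF \<omega>], of "\<bar>\<eta>\<bar>"] \<eta>C by (simp add: abs_mult)
    from exp_le_one_plus_quadratic[OF this]
    have "exp (\<eta> * Y \<omega>) \<le> 1 + \<eta> * Y \<omega> + a * (Y \<omega>)\<^sup>2"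
      unfolding a_def by (simp add: power_mult_distrib mult.assoc)
    from mult_left_mono[OF this, of "W \<omega>"] W_bounds[OF \<omega>]
    show "W \<omega> * exp (\<eta> * Y \<omega>) \<le> W \<omega> + \<eta> * (W \<omega> * Y \<omega>) + a * (W \<omega> * (Y \<omega>)\<^sup>2)"
      by (simp add: algebra_simps)
  qed (use int_W int_WY int_WY2 in auto)
  also have "\<dots> = integral\<^sup>L M W + \<eta> * (\<integral>\<omega>. W \<omega> * Y \<omega> \<partial>M) + a * (\<integral>\<omega>. W \<omega> * (Y \<omega>)\<^sup>2 \<partial>M)"
    using int_W int_WY int_WY2 by simp
  also have "\<dots> = (\<integral>\<omega>. W \<omega> + a * (W \<omega> * V \<omega>) \<partial>M)"
    using int_W int_WV Y_meas
      integral_mult_eq_zero_if_cond_exp_zero[OF W_meas Y_meas int_WY Y_mart]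
      integral_mult_cond_exp_version[OF W_meas _ int_WY2 V_meas V_cond]
    by simp
  finally show "(\<integral>\<omega>. W \<omega> * exp (\<eta> * Y \<omega>) \<partial>M) \<le> (\<integral>\<omega>. W \<omega> + (exp 1 - 2) * \<eta>\<^sup>2 * (W \<omega> * V \<omega>) \<partial>M)"
    unfolding a_def .
qed

lemma integral_mult_exp_martingale_increment_le:
  fixes W Y V :: "'a \<Rightarrow> real" and \<eta> C K :: real
  assumes W_meas: "W \<in> borel_measurable F"
    and W_bounds: "\<And>\<omega>. \<omega> \<in> space M \<Longrightarrow> 0 \<le> W \<omega> \<and> W \<omega> \<le> K"
    and Y_meas: "Y \<in> borel_measurable M"
    and Y_bound: "\<And>\<omega>. \<omega> \<in> space M \<Longrightarrow> \<bar>Y \<omega>\<bar> \<le> C" and \<eta>C: "\<bar>\<eta>\<bar> * C \<le> 1"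
    and Y_mart: "AE \<omega> in M. real_cond_exp M F Y \<omega> = 0"
    and V_meas: "V \<in> borel_measurable F" and V_nonneg: "\<And>\<omega>. \<omega> \<in> space M \<Longrightarrow> 0 \<le> V \<omega>"
    and V_cond: "AE \<omega> in M. V \<omega> = real_cond_exp M F (\<lambda>\<omega>. (Y \<omega>)\<^sup>2) \<omega>"
  shows "(\<integral>\<omega>. W \<omega> * exp (\<eta> * Y \<omega> - (exp 1 - 2) * \<eta>\<^sup>2 * V \<omega>) \<partial>M) \<le> integral\<^sup>L M W"
proof -
  define a where "a = (exp 1 - 2) * \<eta>\<^sup>2"
  define W' where "W' \<omega> = W \<omega> * exp (- a * V \<omega>)" for \<omega>
  have a_nonneg: "0 \<le> a"
    unfolding a_def using exp_one_gt_two by simp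
  have [measurable]: "W \<in> borel_measurable F" "V \<in> borel_measurable F"
    by (fact W_meas, fact V_meas)
  have W'_meas: "W' \<in> borel_measurable F"
    unfolding W'_def by measurable
  have V_meas_M: "V \<in> borel_measurable M"
    by (rule measurable_from_subalg[OF subalg V_meas])
  have W'_bounds: "0 \<le> W' \<omega> \<and> W' \<omega> \<le> K" if "\<omega> \<in> space M" for \<omega>
  proof -
    have "exp (- a * V \<omega>) \<le> 1"
      using a_nonneg V_nonneg[OF that] by simp
    then show ?thesis
      using W_bounds[OF that] mult_left_mono[of "exp (- a * V \<omega>)" 1 "W \<omega>"]
      unfolding W'_def by auto
  qed
  note W'_facts = W'_meas W'_bounds Y_meas Y_bound \<eta>C Y_mart V_meas_M V_cond
  have "integrable M W'"
    using W'_bounds measurable_from_subalg[OF subalg W'_meas]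
    by (intro integrable_const_bound[where B = K]) auto
  then have int_lhs: "integrable M (\<lambda>\<omega>. W' \<omega> + a * (W' \<omega> * V \<omega>))"
    using integrable_mult_cond_var[OF W'_facts] by simp
  have int_W: "integrable M W"
    using W_bounds measurable_from_subalg[OF subalg W_meas]
    by (intro integrable_const_bound[where B = K]) auto
  have "(\<integral>\<omega>. W \<omega> * exp (\<eta> * Y \<omega> - (exp 1 - 2) * \<eta>\<^sup>2 * V \<omega>) \<partial>M)
      = (\<integral>\<omega>. W' \<omega> * exp (\<eta> * Y \<omega>) \<partial>M)"
    unfolding W'_def a_def by (simp add: mult.assoc flip: exp_add)
  also have "\<dots> \<le> (\<integral>\<omega>. W' \<omega> + a * (W' \<omega> * V \<omega>) \<partial>M)"
    unfolding a_def by (rule integral_mult_exp_le_cond_var[OF W'_facts])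
  also have "\<dots> \<le> integral\<^sup>L M W"
  proof (rule integral_mono)
    fix \<omega> assume \<omega>: "\<omega> \<in> space M"
    have "exp (- a * V \<omega>) * (1 + a * V \<omega>) \<le> 1"
      using exp_ge_add_one_self[of "a * V \<omega>"] by (simp add: exp_minus field_simps)
    from mult_left_mono[OF this, of "W \<omega>"] W_bounds[OF \<omega>]
    show "W' \<omega> + a * (W' \<omega> * V \<omega>) \<le> W \<omega>"
      unfolding W'_def by (simp add: algebra_simps)
  qed (use int_lhs int_W in auto)
  finally show ?thesis .
qed

end

context prob_space
begin

lemma
  fixes F :: "nat \<Rightarrow> 'a measure" and Y V :: "nat \<Rightarrow> 'a \<Rightarrow> real" and \<eta> C :: real
  assumes F_subalg: "\<And>t. subalgebra M (F t)"
    and F_mono: "\<And>s t. s \<le> t \<Longrightarrow> subalgebra (F t) (F s)"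
    and adapted: "\<And>t. 1 \<le> t \<Longrightarrow> Y t \<in> borel_measurable (F t)"
    and Y_bound: "\<And>t \<omega>. 1 \<le> t \<Longrightarrow> \<omega> \<in> space M \<Longrightarrow> \<bar>Y t \<omega>\<bar> \<le> C" and \<eta>C: "\<bar>\<eta>\<bar> * C \<le> 1"
    and Y_mart: "\<And>t. 1 \<le> t \<Longrightarrow> AE \<omega> in M. real_cond_exp M (F (t - 1)) (Y t) \<omega> = 0"
    and V_meas: "\<And>t. 1 \<le> t \<Longrightarrow> V t \<in> borel_measurable (F (t - 1))"
    and V_nonneg: "\<And>t \<omega>. 1 \<le> t \<Longrightarrow> \<omega> \<in> space M \<Longrightarrow> 0 \<le> V t \<omega>"
    and V_cond: "\<And>t. 1 \<le> t \<Longrightarrow>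
      AE \<omega> in M. V t \<omega> = real_cond_exp M (F (t - 1)) (\<lambda>\<omega>. (Y t \<omega>)\<^sup>2) \<omega>"
  shows integrable_exp_martingale:
      "integrable M (\<lambda>\<omega>. exp (\<Sum>\<tau> = 1..t. \<eta> * Y \<tau> \<omega> - (exp 1 - 2) * \<eta>\<^sup>2 * V \<tau> \<omega>))"
    and integral_exp_martingale_le_one:
      "(\<integral>\<omega>. exp (\<Sum>\<tau> = 1..t. \<eta> * Y \<tau> \<omega> - (exp 1 - 2) * \<eta>\<^sup>2 * V \<tau> \<omega>) \<partial>M) \<le> 1"
proof -
  define Z where "Z t \<omega> = exp (\<Sum>\<tau> = 1..t. \<eta> * Y \<tau> \<omega> - (exp 1 - 2) * \<eta>\<^sup>2 * V \<tau> \<omega>)" for t \<omega>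
  have Z_meas: "Z t \<in> borel_measurable (F t)" for t
  proof -
    have [measurable]: "Y \<tau> \<in> borel_measurable (F t)" "V \<tau> \<in> borel_measurable (F t)"
      if "\<tau> \<in> {1..t}" for \<tau>
      using measurable_from_subalg[OF F_mono[of \<tau> t] adapted[of \<tau>]]
        measurable_from_subalg[OF F_mono[of "\<tau> - 1" t] V_meas[of \<tau>]] that by auto
    show ?thesis
      unfolding Z_def by measurable
  qed
  have Z_bounds: "0 \<le> Z t \<omega> \<and> Z t \<omega> \<le> exp (real t * \<bar>\<eta>\<bar> * C)" if \<omega>: "\<omega> \<in> space M" for t \<omega>
  proof -
    have "(\<Sum>\<tau> = 1..t. \<eta> * Y \<tau> \<omega> - (exp 1 - 2) * \<eta>\<^sup>2 * V \<tau> \<omega>) \<le> (\<Sum>\<tau> = 1..t. \<bar>\<eta>\<bar> * C)"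
    proof (rule sum_mono)
      fix \<tau> assume "\<tau> \<in> {1..t}"
      then have "1 \<le> \<tau>" by simp
      then have "\<eta> * Y \<tau> \<omega> \<le> \<bar>\<eta>\<bar> * C" "0 \<le> (exp 1 - 2) * \<eta>\<^sup>2 * V \<tau> \<omega>"
        using mult_le_abs_mult_bound[OF Y_bound] V_nonneg \<omega> exp_one_gt_two by simp_all
      then show "\<eta> * Y \<tau> \<omega> - (exp 1 - 2) * \<eta>\<^sup>2 * V \<tau> \<omega> \<le> \<bar>\<eta>\<bar> * C"
        by linarith
    qed
    then show ?thesis
      unfolding Z_def by (simp add: mult.assoc)
  qed
  show "integrable M (Z t)" for t
    using Z_bounds measurable_from_subalg[OF F_subalg Z_meas]
    by (intro integrable_const_bound[where B = "exp (real t * \<bar>\<eta>\<bar> * C)"]) auto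
  show "integral\<^sup>L M (Z t) \<le> 1"
  proof (induction t)
    case 0
    show ?case by (simp add: Z_def prob_space)
  next
    case (Suc t)
    interpret finite_measure_subalgebra M "F t" by unfold_locales (rule F_subalg)
    have "Z (Suc t) = (\<lambda>\<omega>. Z t \<omega> * exp (\<eta> * Y (Suc t) \<omega> - (exp 1 - 2) * \<eta>\<^sup>2 * V (Suc t) \<omega>))"
      unfolding Z_def by (simp add: exp_add fun_eq_iff)
    then have "integral\<^sup>L M (Z (Suc t))
        = (\<integral>\<omega>. Z t \<omega> * exp (\<eta> * Y (Suc t) \<omega> - (exp 1 - 2) * \<eta>\<^sup>2 * V (Suc t) \<omega>) \<partial>M)"
      by simp
    also have "\<dots> \<le> integral\<^sup>L M (Z t)"
    proof (rule integral_mult_exp_martingale_increment_le[OF Z_meas Z_bounds _ _ \<eta>C])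
      show "Y (Suc t) \<in> borel_measurable M"
        using measurable_from_subalg[OF F_subalg adapted[of "Suc t"]] by simp
      show "\<bar>Y (Suc t) \<omega>\<bar> \<le> C" if "\<omega> \<in> space M" for \<omega>
        using Y_bound[of "Suc t" \<omega>] that by simp
      show "AE \<omega> in M. real_cond_exp M (F t) (Y (Suc t)) \<omega> = 0"
        using Y_mart[of "Suc t"] by simp
      show "V (Suc t) \<in> borel_measurable (F t)"
        using V_meas[of "Suc t"] by simp
      show "0 \<le> V (Suc t) \<omega>" if "\<omega> \<in> space M" for \<omega>
        using V_nonneg[of "Suc t" \<omega>] that by simp
      show "AE \<omega> in M. V (Suc t) \<omega> = real_cond_exp M (F t) (\<lambda>\<omega>. (Y (Suc t) \<omega>)\<^sup>2) \<omega>"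
        using V_cond[of "Suc t"] by simp
    qed
    finally show ?case
      using Suc.IH by simp
  qed
qed

lemma nn_integral_exp_martingale_le_one:
  fixes F :: "nat \<Rightarrow> 'a measure" and Y V :: "nat \<Rightarrow> 'a \<Rightarrow> real" and \<eta> C :: real
  assumes F_subalg: "\<And>t. subalgebra M (F t)"
    and F_mono: "\<And>s t. s \<le> t \<Longrightarrow> subalgebra (F t) (F s)"
    and adapted: "\<And>t. 1 \<le> t \<Longrightarrow> Y t \<in> borel_measurable (F t)"
    and Y_bound: "\<And>t \<omega>. 1 \<le> t \<Longrightarrow> \<omega> \<in> space M \<Longrightarrow> \<bar>Y t \<omega>\<bar> \<le> C" and \<eta>C: "\<bar>\<eta>\<bar> * C \<le> 1"
    and Y_mart: "\<And>t. 1 \<le> t \<Longrightarrow> AE \<omega> in M. real_cond_exp M (F (t - 1)) (Y t) \<omega> = 0"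
    and V_cond: "\<And>t. 1 \<le> t \<Longrightarrow>
      AE \<omega> in M. V t \<omega> = real_cond_exp M (F (t - 1)) (\<lambda>\<omega>. (Y t \<omega>)\<^sup>2) \<omega>"
  shows "(\<integral>\<^sup>+\<omega>. exp (\<eta> * (\<Sum>\<tau> = 1..t. Y \<tau> \<omega>) - (exp 1 - 2) * \<eta>\<^sup>2 * (\<Sum>\<tau> = 1..t. V \<tau> \<omega>)) \<partial>M) \<le> 1"
proof -
  \<comment> \<open>A version of the conditional variance that is nonnegative everywhere, not just a.e.\<close>
  define V' where "V' \<tau> \<omega> = max 0 (real_cond_exp M (F (\<tau> - 1)) (\<lambda>\<omega>. (Y \<tau> \<omega>)\<^sup>2) \<omega>)" for \<tau> \<omega>
  have V'_meas: "V' \<tau> \<in> borel_measurable (F (\<tau> - 1))" for \<tau>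
  proof -
    interpret finite_measure_subalgebra M "F (\<tau> - 1)" by unfold_locales (rule F_subalg)
    show ?thesis
      unfolding V'_def by measurable
  qed
  have V'_cond: "AE \<omega> in M. V' \<tau> \<omega> = real_cond_exp M (F (\<tau> - 1)) (\<lambda>\<omega>. (Y \<tau> \<omega>)\<^sup>2) \<omega>"
    and V_eq: "AE \<omega> in M. V \<tau> \<omega> = V' \<tau> \<omega>" if \<tau>: "1 \<le> \<tau>" for \<tau>
  proof -
    interpret finite_measure_subalgebra M "F (\<tau> - 1)" by unfold_locales (rule F_subalg)
    have "AE \<omega> in M. 0 \<le> real_cond_exp M (F (\<tau> - 1)) (\<lambda>\<omega>. (Y \<tau> \<omega>)\<^sup>2) \<omega>"
      using measurable_from_subalg[OF F_subalg adapted[OF \<tau>]] by (intro real_cond_exp_pos) auto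
    then show "AE \<omega> in M. V' \<tau> \<omega> = real_cond_exp M (F (\<tau> - 1)) (\<lambda>\<omega>. (Y \<tau> \<omega>)\<^sup>2) \<omega>"
      unfolding V'_def by eventually_elim simp
    with V_cond[OF \<tau>] show "AE \<omega> in M. V \<tau> \<omega> = V' \<tau> \<omega>"
      by eventually_elim simp
  qed
  let ?Z = "\<lambda>\<omega>. exp (\<Sum>\<tau> = 1..t. \<eta> * Y \<tau> \<omega> - (exp 1 - 2) * \<eta>\<^sup>2 * V' \<tau> \<omega>)"
  have V'_nonneg: "0 \<le> V' \<tau> \<omega>" for \<tau> \<omega>
    unfolding V'_def by simp
  note Z_facts =
    integrable_exp_martingale[where V = V', OF F_subalg F_mono adapted Y_bound \<eta>C Y_mart V'_meas V'_nonneg V'_cond]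
    integral_exp_martingale_le_one[where V = V', OF F_subalg F_mono adapted Y_bound \<eta>C Y_mart V'_meas V'_nonneg V'_cond]
  have "AE \<omega> in M. \<forall>\<tau>\<in>{1..t}. V \<tau> \<omega> = V' \<tau> \<omega>"
    using V_eq by (intro AE_finite_allI) auto
  then have "(\<integral>\<^sup>+\<omega>. exp (\<eta> * (\<Sum>\<tau> = 1..t. Y \<tau> \<omega>) - (exp 1 - 2) * \<eta>\<^sup>2 * (\<Sum>\<tau> = 1..t. V \<tau> \<omega>)) \<partial>M)
      = (\<integral>\<^sup>+\<omega>. ?Z \<omega> \<partial>M)"
    by (intro nn_integral_cong_AE)
      (auto elim!: eventually_mono simp: sum_subtractf sum_distrib_left intro!: sum.cong)
  also have "\<dots> = ennreal (\<integral>\<omega>. ?Z \<omega> \<partial>M)"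
    using Z_facts(1) by (intro nn_integral_eq_integral) auto
  also have "\<dots> \<le> 1"
    using Z_facts(2) by simp
  finally show ?thesis .
qed

section \<open>A bound uniform in time\<close>

lemma emeasure_Markov_le:
  assumes "u \<in> borel_measurable M" and "(\<integral>\<^sup>+\<omega>. u \<omega> \<partial>M) \<le> 1" and "0 \<le> c"
  shows "emeasure M {\<omega> \<in> space M. 1 \<le> ennreal c * u \<omega>} \<le> ennreal c"
proof -
  have "emeasure M {\<omega> \<in> space M. 1 \<le> ennreal c * u \<omega>}
      \<le> ennreal c * (\<integral>\<^sup>+\<omega>. u \<omega> * indicator (space M) \<omega> \<partial>M)"
    using assms(1) by (intro nn_integral_Markov_inequality) auto
  also have "(\<integral>\<^sup>+\<omega>. u \<omega> * indicator (space M) \<omega> \<partial>M) = (\<integral>\<^sup>+\<omega>. u \<omega> \<partial>M)"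
    by (intro nn_integral_cong) simp
  finally show ?thesis
    using mult_left_mono[OF assms(2), of "ennreal c"] by simp
qed

lemma prob_UN_le_of_inverse_square_bound:
  assumes \<delta>: "0 \<le> \<delta>" and A_sets: "\<And>n. A n \<in> sets M"
    and A_le: "\<And>n. emeasure M (A n) \<le> ennreal (\<delta> / (real n + 2)\<^sup>2)"
  shows "prob (\<Union>n. A n) \<le> \<delta>"
proof -
  note inverse_squares = suminf_inverse_square_shift_le_one
  have "emeasure M (\<Union>n. A n) \<le> (\<Sum>n. emeasure M (A n))"
    using A_sets by (intro emeasure_subadditive_countably) auto
  also have "\<dots> \<le> (\<Sum>n. ennreal (\<delta> * (1 / (real n + 2)\<^sup>2)))"
    using A_le by (intro suminf_le) auto
  also have "\<dots> = ennreal (\<delta> * (\<Sum>n. 1 / (real n + 2)\<^sup>2))"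
    using inverse_squares \<delta> summable_mult[of "\<lambda>n. 1 / (real n + 2)\<^sup>2" \<delta>]
      suminf_mult[of "\<lambda>n. 1 / (real n + 2)\<^sup>2" \<delta>]
    by (subst suminf_ennreal2) auto
  also have "\<dots> \<le> ennreal \<delta>"
    using inverse_squares \<delta> by (intro ennreal_leI) (simp add: mult_left_le)
  finally show ?thesis
    unfolding measure_def using \<delta> by (intro enn2real_leI) auto
qed

text \<open>A union bound over the signs \<open>\<pm>1\<close> and the times \<open>t \<ge> 1\<close>, spending confidence
  \<open>\<delta> / (2 (t + 1)\<^sup>2)\<close> on each event; these sum to at most \<open>\<delta>\<close>.\<close>
lemma simultaneous_Markov_bound:
  fixes \<Phi> :: "real \<Rightarrow> nat \<Rightarrow> 'a \<Rightarrow> ennreal" and \<delta> :: real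
  assumes \<delta>: "0 < \<delta>"
    and \<Phi>_meas: "\<And>s t. s \<in> {-1, 1} \<Longrightarrow> 1 \<le> t \<Longrightarrow> \<Phi> s t \<in> borel_measurable M"
    and \<Phi>_int: "\<And>s t. s \<in> {-1, 1} \<Longrightarrow> 1 \<le> t \<Longrightarrow> (\<integral>\<^sup>+\<omega>. \<Phi> s t \<omega> \<partial>M) \<le> 1"
  shows "\<exists>E\<in>sets M. 1 - \<delta> \<le> prob E \<and>
    (\<forall>\<omega>\<in>E. \<forall>t\<ge>1. \<forall>s\<in>{-1, 1}. \<Phi> s t \<omega> \<le> ennreal (2 * (real t + 1)\<^sup>2 / \<delta>))"
proof -
  define c where "c t = \<delta> / (2 * (real t + 1)\<^sup>2)" for t :: nat
  define A where "A s t = {\<omega> \<in> space M. 1 \<le> ennreal (c t) * \<Phi> s t \<omega>}" for s t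
  define B where "B = (\<Union>n. A 1 (Suc n) \<union> A (-1) (Suc n))"
  have c_pos: "0 < c t" for t
    unfolding c_def using \<delta> by simp
  have A_sets: "A s (Suc n) \<in> sets M" if "s \<in> {-1, 1}" for s n
    using \<Phi>_meas[OF that, of "Suc n"] unfolding A_def by measurable
  have A_le: "emeasure M (A s (Suc n)) \<le> ennreal (c (Suc n))" if "s \<in> {-1, 1}" for s n
    unfolding A_def using \<Phi>_meas[OF that] \<Phi>_int[OF that] c_pos[THEN less_imp_le]
    by (intro emeasure_Markov_le) auto
  have B_sets: "B \<in> sets M"
    unfolding B_def using A_sets by auto
  have "prob B \<le> \<delta>"
    unfolding B_def
  proof (rule prob_UN_le_of_inverse_square_bound)
    show "0 \<le> \<delta>"
      using \<delta> by simp
    show "A 1 (Suc n) \<union> A (-1) (Suc n) \<in> sets M" for n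
      using A_sets[of 1 n] A_sets[of "-1" n] by simp
    fix n
    have "emeasure M (A 1 (Suc n) \<union> A (-1) (Suc n)) \<le> ennreal (c (Suc n)) + ennreal (c (Suc n))"
      using A_sets A_le by (intro order.trans[OF emeasure_subadditive] add_mono) auto
    also have "\<dots> = ennreal (\<delta> / (real n + 2)\<^sup>2)"
      using c_pos[of "Suc n"] by (simp add: c_def add.commute flip: ennreal_plus)
    finally show "emeasure M (A 1 (Suc n) \<union> A (-1) (Suc n)) \<le> ennreal (\<delta> / (real n + 2)\<^sup>2)" .
  qed
  then have "1 - \<delta> \<le> prob (space M - B)"
    using prob_compl[OF B_sets] by simp
  moreover have "\<Phi> s t \<omega> \<le> ennreal (2 * (real t + 1)\<^sup>2 / \<delta>)"
    if "\<omega> \<in> space M - B" "1 \<le> t" "s \<in> {-1, 1}" for \<omega> t s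
  proof -
    obtain n where t: "t = Suc n"
      using \<open>1 \<le> t\<close> by (cases t) auto
    then have "\<not> 1 \<le> ennreal (c t) * \<Phi> s t \<omega>"
      using that unfolding B_def A_def by auto
    then have "ennreal (c t) * \<Phi> s t \<omega> \<le> ennreal (c t) * ennreal (1 / c t)"
      using c_pos[of t] by (simp add: ennreal_mult' flip: ennreal_mult)
    then have "\<Phi> s t \<omega> \<le> ennreal (1 / c t)"
      using c_pos[of t] by (simp add: ennreal_mult_le_mult_iff)
    then show ?thesis
      by (simp add: c_def)
  qed
  ultimately show ?thesis
    using B_sets by (intro bexI[of _ "space M - B"]) auto
qed

lemma measurable_event_refine_AE:
  assumes "E \<in> sets M" and "AE \<omega> in M. P \<omega>"
  obtains E' where "E' \<in> sets M" "E' \<subseteq> E" "prob E' = prob E" "\<And>\<omega>. \<omega> \<in> E' \<Longrightarrow> P \<omega>"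
proof -
  obtain N where N: "{\<omega> \<in> space M. \<not> P \<omega>} \<subseteq> N" "emeasure M N = 0" "N \<in> sets M"
    using assms(2) by (rule AE_E)
  have "prob (E - N) = prob E"
    using N assms(1) by (intro measure_Diff_null_set) (auto simp: null_sets_def)
  then show ?thesis
    using that[of "E - N"] N assms(1) sets.sets_into_space[OF assms(1)] by auto
qed

end

lemma sets_obs_filtration:
  "sets (obs_filtration M H X t) = sigma_sets (space M)
     {X \<tau> h -` B \<inter> space M | \<tau> h B. 1 \<le> \<tau> \<and> \<tau> \<le> t \<and> h \<in> space H \<and> B \<in> sets borel}"
  unfolding obs_filtration_def by (rule sets_measure_of) auto

lemma space_obs_filtration [simp]: "space (obs_filtration M H X t) = space M"
  unfolding obs_filtration_def by (rule space_measure_of) auto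

lemma obs_filtration_mono:
  assumes "s \<le> t"
  shows "subalgebra (obs_filtration M H X t) (obs_filtration M H X s)"
  unfolding subalgebra_def sets_obs_filtration
  using assms by (intro conjI sigma_sets_mono') (auto intro: order.trans)

lemma subalgebra_obs_filtration:
  assumes "\<And>\<tau> h. 1 \<le> \<tau> \<Longrightarrow> h \<in> space H \<Longrightarrow> X \<tau> h \<in> borel_measurable M"
  shows "subalgebra M (obs_filtration M H X t)"
  unfolding subalgebra_def sets_obs_filtration
  using assms by (auto intro!: sets.sigma_sets_subset measurable_sets)

lemma measurable_obs_filtration:
  assumes "1 \<le> \<tau>" "\<tau> \<le> t" "h \<in> space H"
  shows "X \<tau> h \<in> borel_measurable (obs_filtration M H X t)"
proof (rule measurableI)
  fix B :: "real set" assume "B \<in> sets borel"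
  then show "X \<tau> h -` B \<inter> space (obs_filtration M H X t) \<in> sets (obs_filtration M H X t)"
    unfolding sets_obs_filtration using assms by auto
qed simp

section \<open>Martingale differences indexed by hypotheses\<close>

locale martingale_difference_family = prob_space M for M :: "'a measure" +
  fixes H :: "'h measure" and X CV :: "nat \<Rightarrow> 'h \<Rightarrow> 'a \<Rightarrow> real" and C :: real
  assumes X_meas: "\<And>t. t \<ge> 1 \<Longrightarrow> (\<lambda>(h, \<omega>). X t h \<omega>) \<in> borel_measurable (H \<Otimes>\<^sub>M M)"
    and X_bound: "\<And>t h \<omega>. t \<ge> 1 \<Longrightarrow> h \<in> space H \<Longrightarrow> \<omega> \<in> space M \<Longrightarrow> \<bar>X t h \<omega>\<bar> \<le> C"
    and X_mart: "\<And>t h. t \<ge> 1 \<Longrightarrow> h \<in> space H \<Longrightarrow>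
        AE \<omega> in M. real_cond_exp M (obs_filtration M H X (t - 1)) (X t h) \<omega> = 0"
    and CV_meas: "\<And>t. t \<ge> 1 \<Longrightarrow> (\<lambda>(h, \<omega>). CV t h \<omega>) \<in> borel_measurable (H \<Otimes>\<^sub>M M)"
    and CV_version: "\<And>t h. t \<ge> 1 \<Longrightarrow> h \<in> space H \<Longrightarrow>
        AE \<omega> in M. CV t h \<omega> =
          real_cond_exp M (obs_filtration M H X (t - 1)) (\<lambda>\<omega>. (X t h \<omega>)\<^sup>2) \<omega>"
begin

abbreviation Msum :: "nat \<Rightarrow> 'h \<Rightarrow> 'a \<Rightarrow> real" where
  "Msum t h \<omega> \<equiv> \<Sum>\<tau> = 1..t. X \<tau> h \<omega>"

abbreviation Vsum :: "nat \<Rightarrow> 'h \<Rightarrow> 'a \<Rightarrow> real" where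
  "Vsum t h \<omega> \<equiv> \<Sum>\<tau> = 1..t. CV \<tau> h \<omega>"

lemma X_measurable: "1 \<le> t \<Longrightarrow> h \<in> space H \<Longrightarrow> X t h \<in> borel_measurable M"
  using measurable_compose[OF measurable_Pair1' X_meas] by simp

lemma Msum_measurable: "(\<lambda>(h, \<omega>). Msum t h \<omega>) \<in> borel_measurable (H \<Otimes>\<^sub>M M)"
  using borel_measurable_sum[of "{1..t}" "\<lambda>\<tau> x. case x of (h, \<omega>) \<Rightarrow> X \<tau> h \<omega>"] X_meas
  by (simp add: case_prod_beta')

lemma Vsum_measurable: "(\<lambda>(h, \<omega>). Vsum t h \<omega>) \<in> borel_measurable (H \<Otimes>\<^sub>M M)"
  using borel_measurable_sum[of "{1..t}" "\<lambda>\<tau> x. case x of (h, \<omega>) \<Rightarrow> CV \<tau> h \<omega>"] CV_meas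
  by (simp add: case_prod_beta')

lemma Msum_bound: "h \<in> space H \<Longrightarrow> \<omega> \<in> space M \<Longrightarrow> \<bar>Msum t h \<omega>\<bar> \<le> real t * C"
  using order.trans[OF sum_abs sum_mono[of "{1..t}" "\<lambda>\<tau>. \<bar>X \<tau> h \<omega>\<bar>" "\<lambda>_. C"]] X_bound
  by simp

lemma nn_integral_exp_Msum_le_one:
  assumes "h \<in> space H" and "\<bar>\<eta>\<bar> * C \<le> 1"
  shows "(\<integral>\<^sup>+\<omega>. exp (\<eta> * Msum t h \<omega> - (exp 1 - 2) * \<eta>\<^sup>2 * Vsum t h \<omega>) \<partial>M) \<le> 1"
  using assms
  by (intro nn_integral_exp_martingale_le_one[where F = "obs_filtration M H X"]
      subalgebra_obs_filtration obs_filtration_mono measurable_obs_filtration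
      X_measurable X_mart CV_version) (auto intro: X_bound)

lemma
  assumes \<mu>: "prob_space \<mu>" "sets \<mu> = sets H" and \<eta>C: "\<bar>\<eta>\<bar> * C \<le> 1"
  shows nn_integral_mixture_exp_Msum_le_one:
      "(\<integral>\<^sup>+\<omega>. (\<integral>\<^sup>+h. exp (\<eta> * Msum t h \<omega> - (exp 1 - 2) * \<eta>\<^sup>2 * Vsum t h \<omega>) \<partial>\<mu>) \<partial>M) \<le> 1"
    and measurable_mixture_exp_Msum:
      "(\<lambda>\<omega>. \<integral>\<^sup>+h. exp (\<eta> * Msum t h \<omega> - (exp 1 - 2) * \<eta>\<^sup>2 * Vsum t h \<omega>) \<partial>\<mu>) \<in> borel_measurable M"
proof -
  interpret \<mu>: prob_space \<mu> by (rule \<mu>(1))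
  interpret pair_sigma_finite \<mu> M by unfold_locales
  note pair_sets = measurable_cong_sets[OF sets_pair_measure_cong[OF \<mu>(2) refl] refl]
  have [measurable]: "(\<lambda>(h, \<omega>). Msum t h \<omega>) \<in> borel_measurable (\<mu> \<Otimes>\<^sub>M M)"
      "(\<lambda>(h, \<omega>). Vsum t h \<omega>) \<in> borel_measurable (\<mu> \<Otimes>\<^sub>M M)"
    unfolding pair_sets by (fact Msum_measurable, fact Vsum_measurable)
  let ?f = "\<lambda>(h, \<omega>). ennreal (exp (\<eta> * Msum t h \<omega> - (exp 1 - 2) * \<eta>\<^sup>2 * Vsum t h \<omega>))"
  have f_meas: "?f \<in> borel_measurable (\<mu> \<Otimes>\<^sub>M M)"
    by measurable
  have "(\<integral>\<^sup>+\<omega>. (\<integral>\<^sup>+h. exp (\<eta> * Msum t h \<omega> - (exp 1 - 2) * \<eta>\<^sup>2 * Vsum t h \<omega>) \<partial>\<mu>) \<partial>M)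
      = (\<integral>\<^sup>+h. (\<integral>\<^sup>+\<omega>. exp (\<eta> * Msum t h \<omega> - (exp 1 - 2) * \<eta>\<^sup>2 * Vsum t h \<omega>) \<partial>M) \<partial>\<mu>)"
    using Fubini'[OF f_meas] by simp
  also have "\<dots> \<le> (\<integral>\<^sup>+h. 1 \<partial>\<mu>)"
    using sets_eq_imp_space_eq[OF \<mu>(2)] \<eta>C by (intro nn_integral_mono nn_integral_exp_Msum_le_one) auto
  finally show "(\<integral>\<^sup>+\<omega>. (\<integral>\<^sup>+h. exp (\<eta> * Msum t h \<omega> - (exp 1 - 2) * \<eta>\<^sup>2 * Vsum t h \<omega>) \<partial>\<mu>) \<partial>M) \<le> 1"
    by (simp add: \<mu>.emeasure_space_1)
  have "(\<lambda>(\<omega>, h). ennreal (exp (\<eta> * Msum t h \<omega> - (exp 1 - 2) * \<eta>\<^sup>2 * Vsum t h \<omega>)))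
      \<in> borel_measurable (M \<Otimes>\<^sub>M \<mu>)"
    using measurable_compose[OF measurable_pair_swap' f_meas] by (simp add: split_beta')
  then show "(\<lambda>\<omega>. \<integral>\<^sup>+h. exp (\<eta> * Msum t h \<omega> - (exp 1 - 2) * \<eta>\<^sup>2 * Vsum t h \<omega>) \<partial>\<mu>) \<in> borel_measurable M"
    by (rule \<mu>.borel_measurable_nn_integral)
qed

lemma AE_CV_bounds:
  assumes \<tau>: "1 \<le> \<tau>" and h: "h \<in> space H"
  shows "AE \<omega> in M. 0 \<le> CV \<tau> h \<omega> \<and> CV \<tau> h \<omega> \<le> C\<^sup>2"
proof -
  interpret finite_measure_subalgebra M "obs_filtration M H X (\<tau> - 1)"
    by unfold_locales (intro subalgebra_obs_filtration X_measurable)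
  have [measurable]: "X \<tau> h \<in> borel_measurable M"
    using X_measurable \<tau> h by simp
  have X_sq_bound: "(X \<tau> h \<omega>)\<^sup>2 \<le> C\<^sup>2" if "\<omega> \<in> space M" for \<omega>
    using power_mono[OF X_bound abs_ge_zero, of \<tau> h \<omega> 2] \<tau> h that by simp
  have "integrable M (\<lambda>\<omega>. (X \<tau> h \<omega>)\<^sup>2)"
    using X_sq_bound by (intro integrable_const_bound[where B = "C\<^sup>2"]) auto
  then have "AE \<omega> in M. real_cond_exp M (obs_filtration M H X (\<tau> - 1)) (\<lambda>\<omega>. (X \<tau> h \<omega>)\<^sup>2) \<omega> \<le> C\<^sup>2"
    using X_sq_bound by (intro real_cond_exp_le_c AE_I2) auto
  moreover have "AE \<omega> in M. 0 \<le> real_cond_exp M (obs_filtration M H X (\<tau> - 1)) (\<lambda>\<omega>. (X \<tau> h \<omega>)\<^sup>2) \<omega>"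
    by (intro real_cond_exp_pos) auto
  moreover have "AE \<omega> in M. CV \<tau> h \<omega> =
      real_cond_exp M (obs_filtration M H X (\<tau> - 1)) (\<lambda>\<omega>. (X \<tau> h \<omega>)\<^sup>2) \<omega>"
    using CV_version \<tau> h by simp
  ultimately show ?thesis
    by eventually_elim simp
qed

lemma AE_Vsum_bound:
  assumes \<mu>: "prob_space \<mu>" "sets \<mu> = sets H"
  shows "AE \<omega> in M. AE h in \<mu>. \<bar>Vsum t h \<omega>\<bar> \<le> real t * C\<^sup>2"
proof -
  interpret \<mu>: prob_space \<mu> by (rule \<mu>(1))
  interpret pair_sigma_finite \<mu> M by unfold_locales
  note pair_sets = measurable_cong_sets[OF sets_pair_measure_cong[OF \<mu>(2) refl] refl]
  have [measurable]: "(\<lambda>(h, \<omega>). Vsum t h \<omega>) \<in> borel_measurable (\<mu> \<Otimes>\<^sub>M M)"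
    unfolding pair_sets by (fact Vsum_measurable)
  have "AE h in \<mu>. AE \<omega> in M. \<bar>Vsum t h \<omega>\<bar> \<le> real t * C\<^sup>2"
  proof (rule AE_I2)
    fix h assume "h \<in> space \<mu>"
    then have h: "h \<in> space H"
      using sets_eq_imp_space_eq[OF \<mu>(2)] by simp
    have "AE \<omega> in M. \<forall>\<tau>\<in>{1..t}. 0 \<le> CV \<tau> h \<omega> \<and> CV \<tau> h \<omega> \<le> C\<^sup>2"
    proof (rule AE_finite_allI)
      show "AE \<omega> in M. 0 \<le> CV \<tau> h \<omega> \<and> CV \<tau> h \<omega> \<le> C\<^sup>2" if "\<tau> \<in> {1..t}" for \<tau>
        using that by (intro AE_CV_bounds[OF _ h]) simp
    qed simp
    then show "AE \<omega> in M. \<bar>Vsum t h \<omega>\<bar> \<le> real t * C\<^sup>2"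
    proof eventually_elim
      case (elim \<omega>)
      then show ?case
        using order.trans[OF sum_abs sum_mono[of "{1..t}" "\<lambda>\<tau>. \<bar>CV \<tau> h \<omega>\<bar>" "\<lambda>_. C\<^sup>2"]] by simp
    qed
  qed
  moreover have "{x \<in> space (\<mu> \<Otimes>\<^sub>M M). \<bar>Vsum t (fst x) (snd x)\<bar> \<le> real t * C\<^sup>2} \<in> sets (\<mu> \<Otimes>\<^sub>M M)"
    by measurable
  ultimately show ?thesis
    using AE_commute[where P = "\<lambda>h \<omega>. \<bar>Vsum t h \<omega>\<bar> \<le> real t * C\<^sup>2"] by simp
qed

lemma PAC_Bayes_Bernstein_pointwise:
  fixes \<mu> \<rho> :: "'h measure" and L W :: real and \<omega> :: 'a
  defines "\<eta> \<equiv> sqrt (L / ((exp 1 - 2) * W))"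
  assumes \<omega>: "\<omega> \<in> space M" and L: "0 < L" and W: "0 < W"
    and \<mu>: "prob_space \<mu>" "sets \<mu> = sets H" and \<rho>: "prob_space \<rho>" "sets \<rho> = sets H"
    and exp_bound: "\<And>s. s \<in> {-1, 1} \<Longrightarrow>
      (\<integral>\<^sup>+h. exp (s * \<eta> * Msum t h \<omega> - (exp 1 - 2) * \<eta>\<^sup>2 * Vsum t h \<omega>) \<partial>\<mu>) \<le> ennreal (exp L)"
    and Vsum_bound: "AE h in \<mu>. \<bar>Vsum t h \<omega>\<bar> \<le> real t * C\<^sup>2"
  shows "ereal \<bar>\<integral>h. Msum t h \<omega> \<partial>\<rho>\<bar> \<le> ereal (sqrt (exp 1 - 2)) *
    (KL \<rho> \<mu> * ereal (sqrt (W / L)) + ereal ((\<integral>h. Vsum t h \<omega> \<partial>\<rho>) * sqrt (L / W) + sqrt (L * W)))"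
proof (rule ereal_abs_le_rescale[OF L W _ \<eta>_def[THEN meta_eq_to_obj_eq]])
  have space_\<mu>: "space \<mu> = space H"
    by (rule sets_eq_imp_space_eq[OF \<mu>(2)])
  have sums_meas: "(\<lambda>h. Msum t h \<omega>) \<in> borel_measurable \<mu>" "(\<lambda>h. Vsum t h \<omega>) \<in> borel_measurable \<mu>"
    using measurable_compose[OF measurable_Pair2'[OF \<omega>] Msum_measurable]
      measurable_compose[OF measurable_Pair2'[OF \<omega>] Vsum_measurable]
    by (simp_all add: measurable_cong_sets[OF \<mu>(2) refl])
  show "0 < exp 1 - (2::real)"
    using exp_one_gt_two by simp
  have "ereal \<bar>\<eta> * (\<integral>h. Msum t h \<omega> \<partial>\<rho>)\<bar>
      \<le> KL \<rho> \<mu> + ereal (ln (exp L) + (exp 1 - 2) * \<eta>\<^sup>2 * (\<integral>h. Vsum t h \<omega> \<partial>\<rho>))"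
  proof (rule abs_integral_le_KL_plus_ln[OF \<mu>(1) \<rho>(1)])
    show "sets \<rho> = sets \<mu>"
      using \<mu>(2) \<rho>(2) by simp
    show "\<bar>Msum t h \<omega>\<bar> \<le> real t * C" if "h \<in> space \<mu>" for h
      using Msum_bound[OF _ \<omega>] that space_\<mu> by simp
  qed (use sums_meas Vsum_bound exp_bound in simp_all)
  then show "ereal \<bar>\<eta> * (\<integral>h. Msum t h \<omega> \<partial>\<rho>)\<bar>
      \<le> KL \<rho> \<mu> + ereal (L + (exp 1 - 2) * \<eta>\<^sup>2 * (\<integral>h. Vsum t h \<omega> \<partial>\<rho>))"
    by simp
qed

lemma exp_moment_bound_event:
  fixes \<eta> :: "nat \<Rightarrow> real" and \<mu> :: "nat \<Rightarrow> 'h measure" and \<delta> :: real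
  assumes \<delta>: "0 < \<delta>"
    and mu: "\<And>t. 1 \<le> t \<Longrightarrow> prob_space (\<mu> t) \<and> sets (\<mu> t) = sets H"
    and \<eta>C: "\<And>t. 1 \<le> t \<Longrightarrow> \<bar>\<eta> t\<bar> * C \<le> 1"
  obtains E where "E \<in> sets M" "1 - \<delta> \<le> prob E"
    and "\<And>\<omega> t s. \<omega> \<in> E \<Longrightarrow> 1 \<le> t \<Longrightarrow> s \<in> {-1, 1} \<Longrightarrow>
      (\<integral>\<^sup>+h. exp (s * \<eta> t * Msum t h \<omega> - (exp 1 - 2) * (\<eta> t)\<^sup>2 * Vsum t h \<omega>) \<partial>\<mu> t)
        \<le> ennreal (2 * (real t + 1)\<^sup>2 / \<delta>)"
    and "\<And>\<omega> t. \<omega> \<in> E \<Longrightarrow> 1 \<le> t \<Longrightarrow> AE h in \<mu> t. \<bar>Vsum t h \<omega>\<bar> \<le> real t * C\<^sup>2"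
proof -
  define \<Phi> where "\<Phi> s t \<omega> =
    (\<integral>\<^sup>+h. exp (s * \<eta> t * Msum t h \<omega> - (exp 1 - 2) * (\<eta> t)\<^sup>2 * Vsum t h \<omega>) \<partial>\<mu> t)" for s t \<omega>
  have \<Phi>_mixture: "\<Phi> s t = (\<lambda>\<omega>. \<integral>\<^sup>+h.
      exp ((s * \<eta> t) * Msum t h \<omega> - (exp 1 - 2) * (s * \<eta> t)\<^sup>2 * Vsum t h \<omega>) \<partial>\<mu> t)"
    and s\<eta>C: "\<bar>s * \<eta> t\<bar> * C \<le> 1" if "s \<in> {-1, 1}" "1 \<le> t" for s t
    using that \<eta>C unfolding \<Phi>_def by (auto simp: power_mult_distrib)
  have \<Phi>_meas: "\<Phi> s t \<in> borel_measurable M" if "s \<in> {-1, 1}" "1 \<le> t" for s t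
    unfolding \<Phi>_mixture[OF that] using mu[OF that(2)] s\<eta>C[OF that]
    by (blast intro: measurable_mixture_exp_Msum)
  have \<Phi>_int: "(\<integral>\<^sup>+\<omega>. \<Phi> s t \<omega> \<partial>M) \<le> 1" if "s \<in> {-1, 1}" "1 \<le> t" for s t
    unfolding \<Phi>_mixture[OF that] using mu[OF that(2)] s\<eta>C[OF that]
    by (blast intro: nn_integral_mixture_exp_Msum_le_one)
  have "\<exists>E\<in>sets M. 1 - \<delta> \<le> prob E \<and>
      (\<forall>\<omega>\<in>E. \<forall>t\<ge>1. \<forall>s\<in>{-1, 1}. \<Phi> s t \<omega> \<le> ennreal (2 * (real t + 1)\<^sup>2 / \<delta>))"
    by (rule simultaneous_Markov_bound[OF \<delta>]) (use \<Phi>_meas \<Phi>_int in auto)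
  then obtain E\<^sub>\<Phi> where E\<^sub>\<Phi>: "E\<^sub>\<Phi> \<in> sets M" "1 - \<delta> \<le> prob E\<^sub>\<Phi>"
    and \<Phi>_bound: "\<forall>\<omega>\<in>E\<^sub>\<Phi>. \<forall>t\<ge>1. \<forall>s\<in>{-1, 1}. \<Phi> s t \<omega> \<le> ennreal (2 * (real t + 1)\<^sup>2 / \<delta>)"
    by blast
  have "AE \<omega> in M. \<forall>t. 1 \<le> t \<longrightarrow> (AE h in \<mu> t. \<bar>Vsum t h \<omega>\<bar> \<le> real t * C\<^sup>2)"
    using AE_Vsum_bound mu by (auto simp: AE_all_countable)
  then obtain E where E: "E \<in> sets M" "E \<subseteq> E\<^sub>\<Phi>" "prob E = prob E\<^sub>\<Phi>"
    and "\<And>\<omega> t. \<omega> \<in> E \<Longrightarrow> 1 \<le> t \<Longrightarrow> AE h in \<mu> t. \<bar>Vsum t h \<omega>\<bar> \<le> real t * C\<^sup>2"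
    by (rule measurable_event_refine_AE[OF E\<^sub>\<Phi>(1)]) blast
  moreover have "\<Phi> s t \<omega> \<le> ennreal (2 * (real t + 1)\<^sup>2 / \<delta>)" if "\<omega> \<in> E" "1 \<le> t" "s \<in> {-1, 1}" for \<omega> t s
    using \<Phi>_bound E(2) that by blast
  ultimately show thesis
    using that[of E] E\<^sub>\<Phi>(2) unfolding \<Phi>_def by simp
qed

lemma PAC_Bayes_Bernstein:
  fixes \<delta> :: real and \<mu> :: "nat \<Rightarrow> 'h measure" and Vbar :: "nat \<Rightarrow> real"
  assumes delta: "0 < \<delta>" "\<delta> < 1"
    and mu: "\<And>t. t \<ge> 1 \<Longrightarrow> prob_space (\<mu> t) \<and> sets (\<mu> t) = sets H"
    and Vbar_pos: "\<And>t. t \<ge> 1 \<Longrightarrow> Vbar t > 0"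
    and Vbar_cond: "\<And>t. t \<ge> 1 \<Longrightarrow>
        C * sqrt ((2 * ln (real t + 1) + ln (2 / \<delta>)) / ((exp 1 - 2) * Vbar t)) \<le> 1"
  shows "\<exists>E \<in> sets M. measure M E \<ge> 1 - \<delta> \<and>
     (\<forall>\<omega> \<in> E. \<forall>t \<ge> 1. \<forall>\<rho> :: 'h measure. prob_space \<rho> \<and> sets \<rho> = sets H \<longrightarrow>
        (let L = 2 * ln (real t + 1) + ln (2 / \<delta>);
             M\<rho> = (\<integral>h. (\<Sum>\<tau> = 1..t. X \<tau> h \<omega>) \<partial>\<rho>);
             V\<rho> = (\<integral>h. (\<Sum>\<tau> = 1..t. CV \<tau> h \<omega>) \<partial>\<rho>)
         in ereal \<bar>M\<rho>\<bar> \<le> ereal (sqrt (exp 1 - 2)) *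
              (KL \<rho> (\<mu> t) * ereal (sqrt (Vbar t / L))
               + ereal (V\<rho> * sqrt (L / Vbar t) + sqrt (L * Vbar t)))))"
proof -
  define L where "L t = 2 * ln (real t + 1) + ln (2 / \<delta>)" for t :: nat
  define \<eta> where "\<eta> t = sqrt (L t / ((exp 1 - 2) * Vbar t))" for t
  have L_pos: "0 < L t" for t
    unfolding L_def using delta by (simp add: add_nonneg_pos)
  have exp_L: "exp (L t) = 2 * (real t + 1)\<^sup>2 / \<delta>" for t
    using exp_of_nat_mult[of 2 "ln (real t + 1)"] delta unfolding L_def by (simp add: exp_add)
  have \<eta>C: "\<bar>\<eta> t\<bar> * C \<le> 1" if "1 \<le> t" for t
  proof -
    have "0 \<le> \<eta> t"
      unfolding \<eta>_def using L_pos[of t] Vbar_pos[OF that] exp_one_gt_two by simp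
    then show ?thesis
      using Vbar_cond[OF that] unfolding \<eta>_def L_def by (simp add: mult.commute)
  qed
  show ?thesis
  proof (rule exp_moment_bound_event[where \<mu> = \<mu> and \<eta> = \<eta>, OF delta(1) mu \<eta>C])
    fix E assume E: "E \<in> sets M" "1 - \<delta> \<le> prob E"
      and exp_bound: "\<And>\<omega> t s. \<omega> \<in> E \<Longrightarrow> 1 \<le> t \<Longrightarrow> s \<in> {-1, 1} \<Longrightarrow>
        (\<integral>\<^sup>+h. exp (s * \<eta> t * Msum t h \<omega> - (exp 1 - 2) * (\<eta> t)\<^sup>2 * Vsum t h \<omega>) \<partial>\<mu> t)
          \<le> ennreal (2 * (real t + 1)\<^sup>2 / \<delta>)"
      and Vsum_bound: "\<And>\<omega> t. \<omega> \<in> E \<Longrightarrow> 1 \<le> t \<Longrightarrow> AE h in \<mu> t. \<bar>Vsum t h \<omega>\<bar> \<le> real t * C\<^sup>2"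
    show ?thesis
    proof (intro bexI[OF _ E(1)] conjI ballI allI impI)
      fix \<omega> and t :: nat and \<rho> :: "'h measure"
      assume \<omega>: "\<omega> \<in> E" and t: "1 \<le> t" and \<rho>: "prob_space \<rho> \<and> sets \<rho> = sets H"
      have "\<omega> \<in> space M"
        using \<omega> E(1) sets.sets_into_space by blast
      from PAC_Bayes_Bernstein_pointwise[OF \<open>\<omega> \<in> space M\<close> L_pos Vbar_pos[OF t] mu[OF t, THEN conjunct1]
          mu[OF t, THEN conjunct2] \<rho>[THEN conjunct1] \<rho>[THEN conjunct2]
          exp_bound[OF \<omega> t, unfolded \<eta>_def exp_L[symmetric]] Vsum_bound[OF \<omega> t]]
      show "let L = 2 * ln (real t + 1) + ln (2 / \<delta>);
               M\<rho> = (\<integral>h. (\<Sum>\<tau> = 1..t. X \<tau> h \<omega>) \<partial>\<rho>);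
               V\<rho> = (\<integral>h. (\<Sum>\<tau> = 1..t. CV \<tau> h \<omega>) \<partial>\<rho>)
           in ereal \<bar>M\<rho>\<bar> \<le> ereal (sqrt (exp 1 - 2)) *
                (KL \<rho> (\<mu> t) * ereal (sqrt (Vbar t / L))
                 + ereal (V\<rho> * sqrt (L / Vbar t) + sqrt (L * Vbar t)))"
        unfolding Let_def L_def by simp
    qed (use E(2) in simp)
  qed
qed

end

theorem theorem1:
  fixes M :: "'a measure" and H :: "'h measure"
    and X :: "nat \<Rightarrow> 'h \<Rightarrow> 'a \<Rightarrow> real"
    and CV :: "nat \<Rightarrow> 'h \<Rightarrow> 'a \<Rightarrow> real"
    and C \<delta> :: real
    and \<mu> :: "nat \<Rightarrow> 'h measure"
    and Vbar :: "nat \<Rightarrow> real"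
  assumes prob: "prob_space M"
    and X_meas: "\<And>t. t \<ge> 1 \<Longrightarrow> (\<lambda>(h, \<omega>). X t h \<omega>) \<in> borel_measurable (H \<Otimes>\<^sub>M M)"
    and X_bound: "\<And>t h \<omega>. t \<ge> 1 \<Longrightarrow> h \<in> space H \<Longrightarrow> \<omega> \<in> space M \<Longrightarrow> \<bar>X t h \<omega>\<bar> \<le> C"
    and X_mart: "\<And>t h. t \<ge> 1 \<Longrightarrow> h \<in> space H \<Longrightarrow>
        AE \<omega> in M. real_cond_exp M (obs_filtration M H X (t - 1)) (X t h) \<omega> = 0"
    and CV_meas: "\<And>t. t \<ge> 1 \<Longrightarrow> (\<lambda>(h, \<omega>). CV t h \<omega>) \<in> borel_measurable (H \<Otimes>\<^sub>M M)"
    and CV_version: "\<And>t h. t \<ge> 1 \<Longrightarrow> h \<in> space H \<Longrightarrow>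
        AE \<omega> in M. CV t h \<omega> =
          real_cond_exp M (obs_filtration M H X (t - 1)) (\<lambda>\<omega>. (X t h \<omega>)\<^sup>2) \<omega>"
    and delta: "0 < \<delta>" "\<delta> < 1"
    and mu: "\<And>t. t \<ge> 1 \<Longrightarrow> prob_space (\<mu> t) \<and> sets (\<mu> t) = sets H"
    and Vbar_pos: "\<And>t. t \<ge> 1 \<Longrightarrow> Vbar t > 0"
    and Vbar_cond: "\<And>t. t \<ge> 1 \<Longrightarrow>
        C * sqrt ((2 * ln (real t + 1) + ln (2 / \<delta>)) / ((exp 1 - 2) * Vbar t)) \<le> 1"
  shows "\<exists>E \<in> sets M. measure M E \<ge> 1 - \<delta> \<and>
     (\<forall>\<omega> \<in> E. \<forall>t \<ge> 1. \<forall>\<rho> :: 'h measure. prob_space \<rho> \<and> sets \<rho> = sets H \<longrightarrow>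
        (let L = 2 * ln (real t + 1) + ln (2 / \<delta>);
             M\<rho> = (\<integral>h. (\<Sum>\<tau> = 1..t. X \<tau> h \<omega>) \<partial>\<rho>);
             V\<rho> = (\<integral>h. (\<Sum>\<tau> = 1..t. CV \<tau> h \<omega>) \<partial>\<rho>)
         in ereal \<bar>M\<rho>\<bar> \<le> ereal (sqrt (exp 1 - 2)) *
              (KL \<rho> (\<mu> t) * ereal (sqrt (Vbar t / L))
               + ereal (V\<rho> * sqrt (L / Vbar t) + sqrt (L * Vbar t)))))"
proof -
  interpret martingale_difference_family M H X CV C
    using prob X_meas X_bound X_mart CV_meas CV_version
    by (simp add: martingale_difference_family_def martingale_difference_family_axioms_def)
  show ?thesis
    by (rule PAC_Bayes_Bernstein[OF delta mu Vbar_pos Vbar_cond])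
qed

end
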